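(* Let $I\in\operatorname{PI}(B)$ have all-positive sign, i.e. $I(\chi)\in\operatorname{Irr}(B)$ for all $\chi\in\operatorname{Irr}(B)$. Then there exist $\lambda\in\operatorname{Irr}(B)$ and $\sigma\in\operatorname{Aut}(G)$ such that $I$ is a composition of $I_\lambda$ and $I_\sigma$ (specifically, $I_\sigma\circ I_\lambda\circ I=\mathrm{id}$ for suitable such $\lambda,\sigma$).
   Context: Let $p$ be a prime, $\zeta$ a primitive $p$-th root of unity, $K=\mathbb{Q}_p(\zeta)$, $\mathcal{O}=\mathbb{Z}_p[\zeta]$. Let $G=\langle g\rangle$ be cyclic of order $p$, $B=\mathcal{O}G$, $\operatorname{Irr}(B)=\{\chi_0,\dots,\chi_{p-1}\}$ with $\chi_a(g^b)=\zeta^{ab}$. $R_K(B)$ is the free abelian group on $\operatorname{Irr}(B)$ with the standard inner product. For a linear map $I$ of $R_K(B)$ put $\mu_I(x,y)=\sum_{\chi}I(\chi)(x)\chi(y)$. A generalized character $\mu$ of $G\times G$ is perfect if (i) $\mu(x,y)/|C_G(x)|,\ \mu(x,y)/|C_G(y)|\in\mathcal{O}$ for all $x,y$; (ii) whenever $\mu(x,y)\ne0$, $x$ is $p$-regular iff $y$ is. $\operatorname{PI}(B)$ is the group of bijective linear isometries $I$ of $R_K(B)$ with $\mu_I$ perfect. For $\lambda\in\operatorname{Irr}(B)$, $I_\lambda(\chi)=\lambda\chi$; for $\sigma\in\operatorname{Aut}(G)$, $I_\sigma(\chi)=\chi^\sigma$ where $\chi^\sigma(h)=\chi(h^{\sigma^{-1}})$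 (both extended linearly). *)

theory Defs
  imports Complex_Main "HOL-Computational_Algebra.Primes"
begin

text \<open>Model: G = cyclic group of order p, with g^b encoded by the exponent b < p.
  Irr(B) = {chi_a | a < p}, chi_a(g^b) = zeta^(a b).  An element of R_K(B) is an integer
  coefficient vector v :: nat => int supported on {..<p}; v stands for sum_a v a * chi_a.\<close>

definition zeta :: "nat \<Rightarrow> complex" where
  "zeta p = cis (2 * pi / real p)"

definition chi :: "nat \<Rightarrow> nat \<Rightarrow> nat \<Rightarrow> complex" where
  "chi p a b = zeta p ^ (a * b)"

definition RK :: "nat \<Rightarrow> (nat \<Rightarrow> int) set" where
  "RK p = {v. \<forall>a. p \<le> a \<longrightarrow> v a = 0}"

definition basis :: "nat \<Rightarrow> nat \<Rightarrow> int" where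
  "basis a = (\<lambda>c. if c = a then 1 else 0)"

definition Irr :: "nat \<Rightarrow> (nat \<Rightarrow> int) set" where
  "Irr p = {basis a | a. a < p}"

definition ev :: "nat \<Rightarrow> (nat \<Rightarrow> int) \<Rightarrow> nat \<Rightarrow> complex" where
  "ev p v b = (\<Sum>a<p. of_int (v a) * chi p a b)"

definition inner :: "nat \<Rightarrow> (nat \<Rightarrow> int) \<Rightarrow> (nat \<Rightarrow> int) \<Rightarrow> int" where
  "inner p u v = (\<Sum>a<p. u a * v a)"

definition linear_RK :: "nat \<Rightarrow> ((nat \<Rightarrow> int) \<Rightarrow> (nat \<Rightarrow> int)) \<Rightarrow> bool" where
  "linear_RK p f \<longleftrightarrow> (\<forall>a<p. f (basis a) \<in> RK p) \<and>
     (\<forall>v\<in>RK p. f v = (\<lambda>c. \<Sum>a<p. v a * f (basis a) c))"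

definition mu :: "nat \<Rightarrow> ((nat \<Rightarrow> int) \<Rightarrow> (nat \<Rightarrow> int)) \<Rightarrow> nat \<Rightarrow> nat \<Rightarrow> complex" where
  "mu p f x y = (\<Sum>a<p. ev p (f (basis a)) x * chi p a y)"

text \<open>Membership in O for elements of Q(zeta) (embedded in C):
  O \<inter> Q(zeta) = Z_(p)[zeta], i.e. z is p-integral iff m z \<in> Z[zeta] for some integer m prime to p.\<close>
definition in_O :: "nat \<Rightarrow> complex \<Rightarrow> bool" where
  "in_O p z \<longleftrightarrow> (\<exists>m::int. \<not> int p dvd m \<and>
      (\<exists>c::nat \<Rightarrow> int. of_int m * z = (\<Sum>k<p. of_int (c k) * zeta p ^ k)))"

definition centr_card :: "nat \<Rightarrow> nat \<Rightarrow> nat" where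
  "centr_card p x = card {h. h < p \<and> (h + x) mod p = (x + h) mod p}"

text \<open>p-regular elements: order prime to p; g^x has order p / gcd(x,p).\<close>
definition p_regular :: "nat \<Rightarrow> nat \<Rightarrow> bool" where
  "p_regular p x \<longleftrightarrow> \<not> p dvd (p div gcd x p)"

definition perfect :: "nat \<Rightarrow> (nat \<Rightarrow> nat \<Rightarrow> complex) \<Rightarrow> bool" where
  "perfect p m \<longleftrightarrow>
     (\<forall>x<p. \<forall>y<p. in_O p (m x y / of_nat (centr_card p x)) \<and>
                  in_O p (m x y / of_nat (centr_card p y))) \<and>
     (\<forall>x<p. \<forall>y<p. m x y \<noteq> 0 \<longrightarrow> (p_regular p x \<longleftrightarrow> p_regular p y))"

definition PI :: "nat \<Rightarrow> ((nat \<Rightarrow> int) \<Rightarrow> (nat \<Rightarrow> int)) \<Rightarrow> bool" where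
  "PI p f \<longleftrightarrow> linear_RK p f \<and> bij_betw f (RK p) (RK p) \<and>
     (\<forall>u\<in>RK p. \<forall>v\<in>RK p. inner p (f u) (f v) = inner p u v) \<and>
     perfect p (mu p f)"

definition elem_of :: "nat \<Rightarrow> (nat \<Rightarrow> complex) \<Rightarrow> nat \<Rightarrow> int" where
  "elem_of p h = (THE w. w \<in> RK p \<and> (\<forall>b<p. ev p w b = h b))"

definition I_lam :: "nat \<Rightarrow> nat \<Rightarrow> (nat \<Rightarrow> int) \<Rightarrow> (nat \<Rightarrow> int)" where
  "I_lam p l v = (\<lambda>c. \<Sum>a<p. v a * elem_of p (\<lambda>b. chi p l b * chi p a b) c)"

definition aut :: "nat \<Rightarrow> (nat \<Rightarrow> nat) \<Rightarrow> bool" where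
  "aut p s \<longleftrightarrow> bij_betw s {..<p} {..<p} \<and>
     (\<forall>x<p. \<forall>y<p. s ((x + y) mod p) = (s x + s y) mod p)"

definition I_sig :: "nat \<Rightarrow> (nat \<Rightarrow> nat) \<Rightarrow> (nat \<Rightarrow> int) \<Rightarrow> (nat \<Rightarrow> int)" where
  "I_sig p s v = (\<lambda>c. \<Sum>a<p. v a * elem_of p (\<lambda>b. chi p a (inv_into {..<p} s b)) c)"

end

theory Submission
  imports Defs "HOL-Computational_Algebra.Polynomial" "HOL-Number_Theory.Cong"
begin

text \<open>Write I(chi_a) = chi_(pi a) for a permutation pi of Z/p.  The integrality part of
  perfectness at x = g says that (sum_a zeta^(pi a + a y)) / p is p-integral for every y.
  Since the p-th cyclotomic polynomial is irreducible (Eisenstein applied to Phi_p(x + 1)), the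
  only integer relations among 1, zeta, ..., zeta^(p-1) are the multiples of their sum, so all
  fibers of a \<mapsto> pi a + a y (mod p) have congruent sizes mod p.  Choosing y so that a = 0 and
  a = 1 lie in the same fiber, a counting argument makes this map constant; hence pi is affine,
  pi a = pi 0 + a c, and I is undone by I_lambda with lambda = chi_(-pi 0) followed by
  I_sigma with sigma multiplication by c.\<close>

section \<open>Eisenstein's criterion and Gauss's lemma\<close>

lemma eisenstein_factor_absurd:
  fixes f A B :: "int poly" and q :: int
  assumes q: "prime q" and fAB: "f = A * B" and degA: "degree A < degree f"
    and coeffs: "\<And>i. i < degree f \<Longrightarrow> q dvd coeff f i"
    and A0: "q dvd coeff A 0" and B0: "\<not> q dvd coeff B 0" and lcA: "\<not> q dvd lead_coeff A"
  shows False
proof -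
  define i where "i = (LEAST i. \<not> q dvd coeff A i)"
  have Ai: "\<not> q dvd coeff A i" unfolding i_def by (rule LeastI[of _ "degree A"]) (rule lcA)
  have i_le: "i \<le> degree A" unfolding i_def by (rule Least_le) (rule lcA)
  have below: "q dvd coeff A j" if "j < i" for j
    using that not_less_Least unfolding i_def by blast
  have "coeff f i = (\<Sum>j<i. coeff A j * coeff B (i - j)) + coeff A i * coeff B 0"
    by (simp add: fAB coeff_mult lessThan_Suc_atMost[symmetric])
  moreover have "q dvd coeff f i" using coeffs degA i_le by simp
  moreover have "q dvd (\<Sum>j<i. coeff A j * coeff B (i - j))" by (rule dvd_sum) (simp add: below)
  ultimately have "q dvd coeff A i * coeff B 0" by (metis dvd_add_right_iff)
  with q Ai B0 show False by (simp add: prime_dvd_mult_iff)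
qed

lemma eisenstein_factor_degree_0:
  fixes f A B :: "int poly" and q :: int
  assumes q: "prime q" and fAB: "f = A * B"
    and lead: "\<not> q dvd lead_coeff f"
    and coeffs: "\<And>i. i < degree f \<Longrightarrow> q dvd coeff f i"
    and const: "\<not> q\<^sup>2 dvd coeff f 0"
  shows "degree A = 0 \<or> degree B = 0"
proof (rule ccontr)
  assume "\<not> (degree A = 0 \<or> degree B = 0)"
  then have A: "A \<noteq> 0" "0 < degree A" and B: "B \<noteq> 0" "0 < degree B" by auto
  have deg: "degree f = degree A + degree B" using A B by (simp add: fAB degree_mult_eq)
  have lc: "\<not> q dvd lead_coeff A" "\<not> q dvd lead_coeff B"
    using lead by (auto simp: fAB lead_coeff_mult)
  have f0: "coeff f 0 = coeff A 0 * coeff B 0" by (simp add: fAB coeff_mult_0)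
  have "q dvd coeff A 0 * coeff B 0" using coeffs[of 0] deg A B f0 by simp
  then have "q dvd coeff A 0 \<or> q dvd coeff B 0" using q by (simp add: prime_dvd_mult_iff)
  moreover have not_both: "\<not> (q dvd coeff A 0 \<and> q dvd coeff B 0)"
    using const f0 by (metis mult_dvd_mono power2_eq_square)
  ultimately show False
  proof (elim disjE)
    assume "q dvd coeff A 0"
    then show False
      using eisenstein_factor_absurd[OF q fAB _ coeffs _ _ lc(1)] deg B not_both by auto
  next
    assume "q dvd coeff B 0"
    moreover have "f = B * A" by (simp add: fAB)
    ultimately show False
      using eisenstein_factor_absurd[OF q _ _ coeffs _ _ lc(2)] deg A not_both by auto
  qed
qed

lemma primitive_factor_of_smult:
  fixes f A B :: "int poly"
  assumes "content f = 1" and "c \<noteq> 0" and "smult c f = A * B"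
  shows "\<exists>A' B'. f = A' * B' \<and> degree A' = degree A \<and> degree B' = degree B"
proof (intro exI conjI)
  have "smult (sgn c) f = primitive_part A * primitive_part B"
    using arg_cong[OF assms(3), of primitive_part] content_times_primitive_part[of f] assms(1)
    by (simp add: primitive_part_mult primitive_part_smult)
  then have "smult (sgn c) (smult (sgn c) f) = smult (sgn c) (primitive_part A) * primitive_part B"
    by simp
  then show "f = smult (sgn c) (primitive_part A) * primitive_part B"
    using assms(2) by (auto simp: sgn_if split: if_splits)
  show "degree (smult (sgn c) (primitive_part A)) = degree A" using assms(2) by (simp add: sgn_if)
qed simp

definition prime_cyclotomic :: "nat \<Rightarrow> int poly" where
  "prime_cyclotomic p = (\<Sum>k<p. monom 1 k)"

lemma add_1_power_minus_1:
  fixes x :: "'a::comm_ring_1"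
  shows "(x + 1) ^ n - 1 = x * (\<Sum>i<n. of_nat (n choose Suc i) * x ^ i)"
proof -
  have "(x + 1) ^ n = (\<Sum>k<Suc n. of_nat (n choose k) * x ^ k)"
    by (simp add: binomial_ring lessThan_Suc_atMost)
  also have "\<dots> = 1 + x * (\<Sum>i<n. of_nat (n choose Suc i) * x ^ i)"
    by (subst sum.lessThan_Suc_shift) (simp add: sum_distrib_left algebra_simps)
  finally show ?thesis by simp
qed

lemma pcompose_prime_cyclotomic:
  "pcompose (prime_cyclotomic p) [:1, 1:] = (\<Sum>i<p. monom (int (p choose Suc i)) i)"
proof -
  have "[:0, 1:] * pcompose (prime_cyclotomic p) [:1, 1:]
      = [:0, 1:] * (\<Sum>i<p. monom (int (p choose Suc i)) i)"
  proof (rule poly_ext)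
    fix x :: int
    have "x * (\<Sum>k<p. (1 + x) ^ k) = x * (\<Sum>i<p. of_nat (p choose Suc i) * x ^ i)"
      using power_diff_1_eq[of "1 + x" p] add_1_power_minus_1[of x p] by (simp add: add.commute)
    then show "poly ([:0, 1:] * pcompose (prime_cyclotomic p) [:1, 1:]) x
      = poly ([:0, 1:] * (\<Sum>i<p. monom (int (p choose Suc i)) i)) x"
      by (simp add: prime_cyclotomic_def poly_pcompose poly_sum poly_monom)
  qed
  then show ?thesis by simp
qed

lemma coeff_pcompose_prime_cyclotomic:
  "coeff (pcompose (prime_cyclotomic p) [:1, 1:]) i = int (p choose Suc i)"
  by (auto simp: pcompose_prime_cyclotomic coeff_sum coeff_monom binomial_eq_0)

lemma degree_pcompose_prime_cyclotomic:
  assumes "p \<ge> 1"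
  shows "degree (pcompose (prime_cyclotomic p) [:1, 1:]) = p - 1"
    and "lead_coeff (pcompose (prime_cyclotomic p) [:1, 1:]) = 1"
proof -
  let ?Q = "pcompose (prime_cyclotomic p) [:1, 1:]"
  have "coeff ?Q (p - 1) = 1" using assms by (simp add: coeff_pcompose_prime_cyclotomic)
  moreover have "degree ?Q \<le> p - 1"
    by (rule degree_le) (simp add: coeff_pcompose_prime_cyclotomic binomial_eq_0)
  ultimately show "degree ?Q = p - 1" "lead_coeff ?Q = 1"
    by (metis le_antisym le_degree one_neq_zero)+
qed

lemma degree_prime_cyclotomic: "p \<ge> 1 \<Longrightarrow> degree (prime_cyclotomic p) = p - 1"
  using degree_pcompose_prime_cyclotomic(1) by (simp add: degree_pcompose)

lemma smult_prime_cyclotomic_factor_degree_0: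
  fixes A B :: "int poly"
  assumes p: "prime p" and c: "c \<noteq> 0" and fac: "smult c (prime_cyclotomic p) = A * B"
  shows "degree A = 0 \<or> degree B = 0"
proof -
  let ?Q = "pcompose (prime_cyclotomic p) [:1, 1:]"
  have p1: "p \<ge> 1" using prime_gt_0_nat[OF p] by simp
  have "smult c ?Q = pcompose A [:1, 1:] * pcompose B [:1, 1:]"
    using arg_cong[OF fac, of "\<lambda>P. pcompose P [:1, 1:]"]
    by (simp add: pcompose_mult pcompose_smult)
  moreover have "is_unit (content ?Q)"
    using content_dvd_coeff[of ?Q "p - 1"] degree_pcompose_prime_cyclotomic[OF p1] by metis
  then have "content ?Q = 1" by (simp only: is_unit_content_iff)
  ultimately obtain A' B' where AB': "?Q = A' * B'"
    and deg: "degree A' = degree A" "degree B' = degree B"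
    using primitive_factor_of_smult[OF _ c] by (force simp: degree_pcompose)
  have q: "prime (int p)" using p by simp
  have lead: "\<not> int p dvd lead_coeff ?Q"
    using degree_pcompose_prime_cyclotomic(2)[OF p1] prime_gt_1_nat[OF p] by simp
  have coeffs: "int p dvd coeff ?Q i" if "i < degree ?Q" for i
    using that p degree_pcompose_prime_cyclotomic[OF p1]
    by (simp add: coeff_pcompose_prime_cyclotomic dvd_choose_prime prime_gt_0_nat)
  have "coeff ?Q 0 = int p" by (simp only: coeff_pcompose_prime_cyclotomic) simp
  then have const: "\<not> (int p)\<^sup>2 dvd coeff ?Q 0"
    using prime_gt_1_nat[OF p] by (simp add: power2_eq_square)
  have "degree A' = 0 \<or> degree B' = 0"
    by (rule eisenstein_factor_degree_0[OF q AB' lead coeffs const])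
  then show ?thesis using deg by simp
qed

section \<open>Integer relations among the powers of zeta\<close>

lemma zeta_power: "zeta p ^ k = cis (2 * pi * real k / real p)"
  by (simp add: zeta_def DeMoivre) (simp add: mult.commute)

lemma zeta_power_p: "0 < p \<Longrightarrow> zeta p ^ p = 1"
  by (simp add: zeta_power)

lemma zeta_power_mod:
  assumes "0 < p"
  shows "zeta p ^ k = zeta p ^ (k mod p)"
proof -
  have "zeta p ^ k = (zeta p ^ p) ^ (k div p) * zeta p ^ (k mod p)"
    by (metis div_mult_mod_eq power_add power_mult mult.commute)
  then show ?thesis using zeta_power_p[OF assms] by simp
qed

lemma zeta_power_neq_1:
  assumes "0 < k" "k < p"
  shows "zeta p ^ k \<noteq> 1"
proof
  assume "zeta p ^ k = 1"
  then have "cos (2 * pi * real k / real p) = 1"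
    by (metis Re_complex_of_real cis.sel(1) of_real_1 zeta_power)
  then obtain n :: int where "2 * pi * real k / real p = real_of_int n * 2 * pi"
    by (auto simp: cos_one_2pi_int)
  then have "real_of_int n = real k / real p" using assms by (simp add: field_simps)
  moreover have "0 < real k / real p" "real k / real p < 1" using assms by simp_all
  ultimately have "0 < n" "n < 1" by simp_all
  then show False by simp
qed

lemma sum_zeta_powers:
  assumes "0 < p" and "\<not> p dvd j"
  shows "(\<Sum>b<p. zeta p ^ (j * b)) = 0"
proof -
  have "zeta p ^ j \<noteq> 1"
    using zeta_power_mod[OF assms(1), of j] zeta_power_neq_1[of "j mod p" p] assms
    by (simp add: dvd_eq_mod_eq_0)
  moreover have "(zeta p ^ j) ^ p = 1"
    by (metis power_mult mult.commute power_one zeta_power_p[OF assms(1)])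
  ultimately show ?thesis by (simp add: power_mult sum_gp_strict)
qed

lemma map_poly_of_int_add: "map_poly of_int (P + Q) = map_poly of_int P + map_poly of_int Q"
  by (rule poly_eqI) (simp add: coeff_map_poly)

lemma map_poly_of_int_mult: "map_poly of_int (P * Q) = map_poly of_int P * map_poly of_int Q"
  by (rule poly_eqI) (simp add: coeff_map_poly coeff_mult)

lemma map_poly_of_int_smult: "map_poly of_int (smult c P) = smult (of_int c) (map_poly of_int P)"
  by (rule poly_eqI) (simp add: coeff_map_poly)

lemma poly_map_poly_of_int_monoms:
  fixes x :: "'a::comm_ring_1"
  shows "poly (map_poly of_int (\<Sum>k<n. monom (e k) k)) x = (\<Sum>k<n. of_int (e k) * x ^ k)"
proof -
  have "map_poly of_int (\<Sum>k<n. monom (e k) k) = (\<Sum>k<n. monom (of_int (e k)) k)"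
    by (rule poly_eqI) (simp add: coeff_map_poly coeff_sum coeff_monom of_int_sum[symmetric]
        del: of_int_sum)
  then show ?thesis unfolding \<open>map_poly of_int _ = _\<close> by (simp add: poly_sum poly_monom)
qed

lemma degree_ge_if_zeta_root:
  fixes P :: "int poly"
  assumes p: "prime p" and "P \<noteq> 0" and "poly (map_poly of_int P) (zeta p) = 0"
  shows "p - 1 \<le> degree P"
  using assms(2,3)
proof (induction "degree P" arbitrary: P rule: less_induct)
  \<comment> \<open>Pseudo-divide prime_cyclotomic p by P: a nonzero remainder is a root of smaller degree,
    a zero remainder is a factorization of a multiple of prime_cyclotomic p.\<close>
  case less
  let ?ev = "\<lambda>Q. poly (map_poly of_int Q) (zeta p)"
  let ?\<Phi> = "prime_cyclotomic p"
  obtain q r where qr: "pseudo_divmod ?\<Phi> P = (q, r)" by fastforce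
  define c where "c = lead_coeff P ^ (Suc (degree ?\<Phi>) - degree P)"
  have c: "c \<noteq> 0" using less.prems by (simp add: c_def)
  have div: "smult c ?\<Phi> = P * q + r"
    using pseudo_divmod(1)[OF less.prems(1) qr] by (simp add: c_def)
  have r: "r = 0 \<or> degree r < degree P" by (rule pseudo_divmod(2)[OF less.prems(1) qr])
  have \<Phi>: "?ev ?\<Phi> = 0"
    using poly_map_poly_of_int_monoms[of "\<lambda>_. 1" p "zeta p"] sum_zeta_powers[of p 1]
      prime_gt_1_nat[OF p] by (simp add: prime_cyclotomic_def)
  show ?case
  proof (cases "r = 0")
    case False
    have "?ev r = 0"
      using arg_cong[OF div, of ?ev] \<Phi> less.prems(2)
      by (simp add: map_poly_of_int_add map_poly_of_int_mult map_poly_of_int_smult)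
    then have "p - 1 \<le> degree r" using less.hyps r False by blast
    then show ?thesis using r False by simp
  next
    case True
    with div have "smult c ?\<Phi> = P * q" by simp
    then have "degree P = 0 \<or> degree q = 0"
      by (rule smult_prime_cyclotomic_factor_degree_0[OF p c])
    then show ?thesis
    proof
      assume "degree P = 0"
      then obtain a where "P = [:a:]" by (rule degree_eq_zeroE)
      then show ?thesis using less.prems by (simp add: map_poly_pCons)
    next
      assume "degree q = 0"
      then have "degree (smult c ?\<Phi>) \<le> degree P"
        using \<open>smult c ?\<Phi> = P * q\<close> degree_mult_le[of P q] by simp
      then show ?thesis using c degree_prime_cyclotomic prime_gt_0_nat[OF p] by simp
    qed
  qed
qed

lemma zeta_relation_coeffs_eq:
  assumes p: "prime p" and rel: "(\<Sum>k<p. of_int (e k) * zeta p ^ k) = 0" and k: "k < p"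
  shows "e k = e 0"
proof -
  have p2: "p \<ge> 2" using p by (simp add: prime_ge_2_nat)
  define P where "P = (\<Sum>k<p - 1. monom (e k - e (p - 1)) k)"
  have "poly (map_poly of_int P) (zeta p) = (\<Sum>k<p. of_int (e k - e (p - 1)) * zeta p ^ k)"
  proof -
    have "{..<p} = insert (p - 1) {..<p - 1}" using p2 by auto
    then show ?thesis unfolding P_def poly_map_poly_of_int_monoms by simp
  qed
  also have "\<dots> = - of_int (e (p - 1)) * (\<Sum>k<p. zeta p ^ (1 * k))"
    using rel by (simp add: algebra_simps sum_subtractf sum_distrib_right)
  also have "\<dots> = 0" using sum_zeta_powers[of p 1] p2 by simp
  finally have "poly (map_poly of_int P) (zeta p) = 0" .
  moreover have "degree P < p - 1" unfolding P_def
    using p2 by (intro degree_lessI) (auto simp: coeff_sum coeff_monom)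
  ultimately have "P = 0" using degree_ge_if_zeta_root[OF p] by fastforce
  then have last: "e j = e (p - 1)" if "j < p" for j
  proof (cases "j = p - 1")
    case False
    then have "j < p - 1" using that by simp
    then have "coeff P j = e j - e (p - 1)" by (simp add: P_def coeff_sum coeff_monom)
    then show ?thesis using \<open>P = 0\<close> by simp
  qed simp
  show ?thesis using last[OF k] last[of 0] p2 by simp
qed

lemma in_O_div_p_coeffs_cong:
  assumes p: "prime p" and O: "in_O p ((\<Sum>k<p. of_int (e k) * zeta p ^ k) / of_nat p)"
    and k: "k < p"
  shows "[e k = e 0] (mod int p)"
proof -
  from O obtain m c where m: "\<not> int p dvd m"
    and mc: "of_int m * ((\<Sum>k<p. of_int (e k) * zeta p ^ k) / of_nat p)
               = (\<Sum>k<p. of_int (c k) * zeta p ^ k)"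
    unfolding in_O_def by blast
  have "(\<Sum>k<p. of_int (m * e k - int p * c k) * zeta p ^ k)
      = of_int m * (\<Sum>k<p. of_int (e k) * zeta p ^ k)
        - of_nat p * (\<Sum>k<p. of_int (c k) * zeta p ^ k)"
    by (simp add: sum_subtractf sum_distrib_left algebra_simps)
  also have "\<dots> = 0" using mc prime_gt_0_nat[OF p] by (simp add: field_simps)
  finally have "m * e k - int p * c k = m * e 0 - int p * c 0"
    by (rule zeta_relation_coeffs_eq[OF p _ k])
  then have "m * (e k - e 0) = int p * (c k - c 0)" by (simp add: algebra_simps)
  then have "int p dvd m * (e k - e 0)" by simp
  then show ?thesis
    using m p by (simp add: cong_iff_dvd_diff prime_dvd_mult_iff)
qed

lemma basis_in_RK: "a < p \<Longrightarrow> basis a \<in> RK p"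
  by (simp add: RK_def basis_def)

lemma basis_inject: "basis a = basis b \<longleftrightarrow> a = b"
  by (metis basis_def one_neq_zero)

lemma ev_basis:
  assumes "c < p"
  shows "ev p (basis c) b = chi p c b"
proof -
  have "ev p (basis c) b = (\<Sum>a<p. if a = c then chi p c b else 0)"
    unfolding ev_def basis_def by (rule sum.cong) auto
  then show ?thesis using assms by simp
qed

lemma sum_zeta_powers_orthogonal:
  assumes "a < p" "c < p"
  shows "(\<Sum>b<p. zeta p ^ ((a + (p - c)) * b)) = (if a = c then of_nat p else 0)"
proof (cases "a = c")
  case True
  then show ?thesis using zeta_power_p[of p] assms by (simp add: power_mult)
next
  case False
  have "\<not> p dvd a + (p - c)"
  proof
    assume "p dvd a + (p - c)"
    then obtain k where k: "a + (p - c) = p * k" by (elim dvdE)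
    moreover have "a + (p - c) < p * 2" using assms by simp
    ultimately have "0 < k" "k < 2" using assms by (auto intro: ccontr)
    then have "a + (p - c) = p" using k by (simp add: numeral_2_eq_2 less_Suc_eq)
    then show False using False assms by simp
  qed
  then show ?thesis using sum_zeta_powers[of p] False assms by simp
qed

lemma ev_inversion:
  assumes w: "w \<in> RK p" and c: "c < p"
  shows "(\<Sum>b<p. ev p w b * zeta p ^ ((p - c) * b)) = of_nat p * of_int (w c)"
proof -
  have "(\<Sum>b<p. ev p w b * zeta p ^ ((p - c) * b))
      = (\<Sum>a<p. of_int (w a) * (\<Sum>b<p. zeta p ^ ((a + (p - c)) * b)))"
    unfolding ev_def chi_def sum_distrib_right sum_distrib_left
    by (subst sum.swap) (simp add: add_mult_distrib2 power_add mult_ac)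
  also have "\<dots> = (\<Sum>a<p. if a = c then of_int (w c) * of_nat p else 0)"
    by (rule sum.cong) (auto simp: sum_zeta_powers_orthogonal c)
  also have "\<dots> = of_nat p * of_int (w c)" using c by simp
  finally show ?thesis .
qed

lemma ev_inject:
  assumes "w \<in> RK p" "w' \<in> RK p" "\<forall>b<p. ev p w b = ev p w' b"
  shows "w = w'"
proof
  fix c
  show "w c = w' c"
  proof (cases "c < p")
    case True
    have "of_nat p * (of_int (w c) :: complex) = of_nat p * of_int (w' c)"
      using ev_inversion[OF assms(1) True] ev_inversion[OF assms(2) True] assms(3) by auto
    then show ?thesis using True by simp
  next
    case False
    then show ?thesis using assms by (simp add: RK_def)
  qed
qed

lemma elem_of_zeta_powers:
  assumes p: "0 < p" and h: "\<forall>b<p. h b = zeta p ^ (j * b)"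
  shows "elem_of p h = basis (j mod p)"
  unfolding elem_of_def
proof (rule the_equality)
  have ev: "\<forall>b<p. ev p (basis (j mod p)) b = h b"
  proof (intro allI impI)
    fix b assume "b < p"
    have "zeta p ^ (j mod p * b) = zeta p ^ (j * b)"
      by (metis zeta_power_mod[OF p] mod_mult_left_eq)
    then show "ev p (basis (j mod p)) b = h b" using p h \<open>b < p\<close> by (simp add: ev_basis chi_def)
  qed
  then show "basis (j mod p) \<in> RK p \<and> (\<forall>b<p. ev p (basis (j mod p)) b = h b)"
    using p by (simp add: basis_in_RK)
  fix w
  assume "w \<in> RK p \<and> (\<forall>b<p. ev p w b = h b)"
  then show "w = basis (j mod p)" using ev p by (intro ev_inject) (auto simp: basis_in_RK)
qed

section \<open>Permutations of Irr(B)\<close>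

definition perm_RK :: "nat \<Rightarrow> (nat \<Rightarrow> nat) \<Rightarrow> (nat \<Rightarrow> int) \<Rightarrow> nat \<Rightarrow> int" where
  "perm_RK p s v = (\<lambda>c. \<Sum>a<p. v a * basis (s a) c)"

lemma perm_RK_comp:
  assumes "\<forall>a<p. s a < p"
  shows "perm_RK p t (perm_RK p s v) = perm_RK p (t \<circ> s) v"
proof
  fix c
  have "perm_RK p t (perm_RK p s v) c = (\<Sum>a<p. v a * (\<Sum>b<p. basis (s a) b * basis (t b) c))"
    unfolding perm_RK_def sum_distrib_right sum_distrib_left
    by (subst sum.swap) (simp add: mult.assoc)
  also have "\<dots> = (\<Sum>a<p. v a * basis (t (s a)) c)"
  proof (rule sum.cong)
    fix a
    assume "a \<in> {..<p}"
    have "(\<Sum>b<p. basis (s a) b * basis (t b) c)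
        = (\<Sum>b<p. if b = s a then basis (t (s a)) c else 0)"
      by (rule sum.cong) (auto simp: basis_def)
    then have "(\<Sum>b<p. basis (s a) b * basis (t b) c) = basis (t (s a)) c"
      using assms \<open>a \<in> {..<p}\<close> by simp
    then show "v a * (\<Sum>b<p. basis (s a) b * basis (t b) c) = v a * basis (t (s a)) c" by simp
  qed simp
  finally show "perm_RK p t (perm_RK p s v) c = perm_RK p (t \<circ> s) v c"
    by (simp add: perm_RK_def)
qed

lemma perm_RK_id_on:
  assumes "\<forall>a<p. s a = a" and "v \<in> RK p"
  shows "perm_RK p s v = v"
proof
  fix c
  have "perm_RK p s v c = (\<Sum>a<p. if a = c then v c else 0)"
    unfolding perm_RK_def by (rule sum.cong) (auto simp: assms(1) basis_def)
  then show "perm_RK p s v c = v c" using assms(2) by (auto simp: RK_def)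
qed

lemma linear_RK_eq_perm_RK:
  assumes "linear_RK p f" and "\<forall>a<p. f (basis a) = basis (\<pi> a)" and "v \<in> RK p"
  shows "f v = perm_RK p \<pi> v"
  using assms by (simp add: linear_RK_def perm_RK_def)

lemma I_lam_eq_perm_RK:
  assumes "0 < p"
  shows "I_lam p l v = perm_RK p (\<lambda>a. (l + a) mod p) v"
proof -
  have "elem_of p (\<lambda>b. chi p l b * chi p a b) = basis ((l + a) mod p)" for a
    using assms by (intro elem_of_zeta_powers) (auto simp: chi_def power_add[symmetric] algebra_simps)
  then show ?thesis by (simp add: I_lam_def perm_RK_def)
qed

lemma mod_mult_inverse_cancel:
  assumes "(c * t) mod p = (1::nat)"
  shows "(t * (c * x)) mod p = x mod p"
  by (metis assms mod_mult_left_eq mult.assoc mult.commute mult_1)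

lemma ex_mult_mod_inverse:
  fixes p c :: nat
  assumes "prime p" and "0 < c" and "c < p"
  obtains t where "(c * t) mod p = 1"
proof -
  have "\<not> p dvd c" using assms(2,3) dvd_imp_le[of p c] by linarith
  then have "coprime c p" using prime_imp_coprime[OF assms(1)] by (simp add: coprime_commute)
  then show ?thesis
    using that cong_solve_coprime_nat prime_gt_1_nat[OF assms(1)] by (fastforce simp: cong_def)
qed

lemma mod_affine_inverse:
  assumes ct: "(c * t) mod p = (1::nat)" and "b < p" and "a < p"
  shows "(((p - b) mod p + (b + a * c) mod p) mod p * t) mod p = a"
proof -
  have "((p - b) mod p + (b + a * c) mod p) mod p = (p + a * c) mod p"
    using assms(2) by (simp add: mod_add_eq)
  then have "(((p - b) mod p + (b + a * c) mod p) mod p * t) mod p = (a * c * t) mod p"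
    by (simp add: mod_mult_left_eq)
  also have "\<dots> = (t * (c * a)) mod p" by (simp add: mult_ac)
  finally have "(((p - b) mod p + (b + a * c) mod p) mod p * t) mod p = (t * (c * a)) mod p" .
  then show ?thesis using mod_mult_inverse_cancel[OF ct, of a] assms(3) by simp
qed

lemma inj_on_mult_mod:
  assumes "(c * t) mod p = (1::nat)"
  shows "inj_on (\<lambda>x. (c * x) mod p) {..<p}"
proof (rule inj_onI)
  fix x y
  assume "x \<in> {..<p}" "y \<in> {..<p}" "(c * x) mod p = (c * y) mod p"
  then have "(t * (c * x)) mod p = (t * (c * y)) mod p" by (metis mod_mult_right_eq)
  then show "x = y" using mod_mult_inverse_cancel[OF assms] \<open>x \<in> _\<close> \<open>y \<in> _\<close> by simp
qed

lemma aut_mult_mod: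
  assumes "(c * t) mod p = (1::nat)"
  shows "aut p (\<lambda>x. (c * x) mod p)"
  unfolding aut_def
proof
  have "(\<lambda>x. (c * x) mod p) ` {..<p} \<subseteq> {..<p}"
    using assms by (auto intro: mod_less_divisor gr0I)
  then show "bij_betw (\<lambda>x. (c * x) mod p) {..<p} {..<p}"
    using endo_inj_surj[OF finite_lessThan _ inj_on_mult_mod[OF assms]] inj_on_mult_mod[OF assms]
    by (simp add: bij_betw_def)
  show "\<forall>x<p. \<forall>y<p. (c * ((x + y) mod p)) mod p = ((c * x) mod p + (c * y) mod p) mod p"
    by (simp add: mod_mult_right_eq add_mult_distrib2 mod_add_eq)
qed

lemma inv_into_mult_mod:
  assumes "(c * t) mod p = (1::nat)" and "b < p"
  shows "inv_into {..<p} (\<lambda>x. (c * x) mod p) b = (t * b) mod p"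
proof (rule inv_into_f_eq[OF inj_on_mult_mod[OF assms(1)]])
  show "(t * b) mod p \<in> {..<p}" using assms(2) by simp
  have "(c * ((t * b) mod p)) mod p = (t * (c * b)) mod p"
    by (simp add: mod_mult_right_eq mult_ac)
  then show "(c * ((t * b) mod p)) mod p = b"
    using mod_mult_inverse_cancel[OF assms(1)] assms(2) by simp
qed

lemma I_sig_mult_mod_eq_perm_RK:
  assumes p: "0 < p" and "(c * t) mod p = (1::nat)"
  shows "I_sig p (\<lambda>x. (c * x) mod p) v = perm_RK p (\<lambda>a. (a * t) mod p) v"
proof -
  have "elem_of p (\<lambda>b. chi p a (inv_into {..<p} (\<lambda>x. (c * x) mod p) b))
      = basis ((a * t) mod p)" for a
  proof (rule elem_of_zeta_powers[OF p], intro allI impI)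
    fix b
    assume "b < p"
    then have "chi p a (inv_into {..<p} (\<lambda>x. (c * x) mod p) b)
        = zeta p ^ ((a * (t * b) mod p))"
      by (simp add: chi_def inv_into_mult_mod[OF assms(2)] zeta_power_mod[OF p, of "a * _"]
          mod_mult_right_eq)
    also have "\<dots> = zeta p ^ (a * t * b)" by (metis zeta_power_mod[OF p] mult.assoc)
    finally show "chi p a (inv_into {..<p} (\<lambda>x. (c * x) mod p) b) = zeta p ^ (a * t * b)" .
  qed
  then show ?thesis by (simp add: I_sig_def perm_RK_def)
qed

lemma I_sig_I_lam_affine_perm_RK:
  assumes p: "0 < p" and ct: "(c * t) mod p = 1" and \<pi>: "\<forall>a<p. \<pi> a < p"
    and aff: "\<forall>a<p. \<pi> a = (\<pi> 0 + a * c) mod p" and v: "v \<in> RK p"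
  shows "I_sig p (\<lambda>x. (c * x) mod p) (I_lam p ((p - \<pi> 0) mod p) (perm_RK p \<pi> v)) = v"
proof -
  let ?l = "(p - \<pi> 0) mod p"
  have "I_sig p (\<lambda>x. (c * x) mod p) (I_lam p ?l (perm_RK p \<pi> v))
      = perm_RK p (\<lambda>a. (a * t) mod p) (perm_RK p (\<lambda>a. (?l + a) mod p) (perm_RK p \<pi> v))"
    using p ct by (simp add: I_sig_mult_mod_eq_perm_RK I_lam_eq_perm_RK)
  also have "\<dots> = perm_RK p (\<lambda>a. (((?l + \<pi> a) mod p) * t) mod p) v"
    using \<pi> p by (simp add: perm_RK_comp comp_def)
  also have "\<dots> = v"
  proof (rule perm_RK_id_on[OF _ v], intro allI impI)
    fix a
    assume "a < p"
    then show "(((?l + \<pi> a) mod p) * t) mod p = a"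
      using mod_affine_inverse[OF ct, of "\<pi> 0" a] \<pi> p aff[rule_format, OF \<open>a < p\<close>] by simp
  qed
  finally show ?thesis .
qed

section \<open>Perfect isometries with all-positive sign\<close>

lemma sum_comp_eq_fiber_card:
  fixes g :: "'a \<Rightarrow> 'b" and h :: "'b \<Rightarrow> 'c::comm_semiring_1"
  assumes "finite A" and "finite B" and "g ` A \<subseteq> B"
  shows "(\<Sum>a\<in>A. h (g a)) = (\<Sum>k\<in>B. of_nat (card {a \<in> A. g a = k}) * h k)"
proof -
  have "(\<Sum>a\<in>A. h (g a)) = (\<Sum>k\<in>B. \<Sum>a\<in>{a \<in> A. g a = k}. h (g a))"
    using sum.group[OF assms, of "\<lambda>a. h (g a)"] by simp
  also have "\<dots> = (\<Sum>k\<in>B. of_nat (card {a \<in> A. g a = k}) * h k)"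
    by (rule sum.cong) simp_all
  finally show ?thesis .
qed

lemma constant_if_fiber_cards_cong:
  fixes g :: "nat \<Rightarrow> nat"
  assumes g: "\<forall>a<p. g a < p"
    and cong: "\<forall>k<p. [card {a. a < p \<and> g a = k} = card {a. a < p \<and> g a = 0}] (mod p)"
    and collision: "a0 < p" "a1 < p" "a0 \<noteq> a1" "g a0 = g a1"
  shows "\<forall>a<p. g a = g a0"
proof -
  define fib where "fib k = {a. a < p \<and> g a = k}" for k
  let ?k0 = "g a0"
  have k0: "?k0 < p" using g collision by simp
  \<comment> \<open>Otherwise all fiber sizes are nonzero mod p, so g is onto, hence injective, on {..<p}.\<close>
  have "p dvd card (fib ?k0)"
  proof (rule ccontr)
    assume nd: "\<not> p dvd card (fib ?k0)"
    have "fib k \<noteq> {}" if "k < p" for k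
    proof
      assume "fib k = {}"
      have "[card (fib ?k0) = card (fib 0)] (mod p)" "[card (fib k) = card (fib 0)] (mod p)"
        using cong k0 that by (simp_all add: fib_def)
      then have "[card (fib ?k0) = card (fib k)] (mod p)" by (metis cong_sym cong_trans)
      then have "[card (fib ?k0) = 0] (mod p)" using \<open>fib k = {}\<close> by simp
      then show False using nd by (simp add: cong_0_iff)
    qed
    then have "g ` {..<p} = {..<p}" using g by (fastforce simp: fib_def)
    then have "inj_on g {..<p}" by (intro eq_card_imp_inj_on) simp_all
    then show False using collision by (auto dest: inj_onD)
  qed
  moreover have sub: "fib ?k0 \<subseteq> {..<p}" by (auto simp: fib_def)
  moreover have "a0 \<in> fib ?k0" using collision by (simp add: fib_def)
  then have "0 < card (fib ?k0)" using sub by (auto simp: card_gt_0_iff intro: finite_subset)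
  ultimately have "card (fib ?k0) = card {..<p}"
    using card_mono[OF finite_lessThan sub] by (simp add: dvd_imp_le le_antisym)
  then have "fib ?k0 = {..<p}" using sub by (intro card_subset_eq) simp_all
  then show ?thesis by (auto simp: fib_def)
qed

lemma perm_affine_if_integral:
  assumes p: "prime p" and \<pi>: "\<forall>a<p. \<pi> a < p" and inj: "inj_on \<pi> {..<p}"
    and O: "\<forall>y<p. in_O p ((\<Sum>a<p. zeta p ^ (\<pi> a + a * y)) / of_nat p)"
  shows "\<exists>c. 0 < c \<and> c < p \<and> (\<forall>a<p. \<pi> a = (\<pi> 0 + a * c) mod p)"
proof -
  have p2: "2 \<le> p" using p by (simp add: prime_ge_2_nat)
  \<comment> \<open>Chosen so that a = 0 and a = 1 lie in the same fiber of g.\<close>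
  define y where "y = (\<pi> 0 + (p - \<pi> 1)) mod p"
  define g where "g a = (\<pi> a + a * y) mod p" for a
  have y: "y < p" using p2 by (simp add: y_def)
  have g: "\<forall>a<p. g a < p" using p2 by (simp add: g_def)
  have "(\<Sum>a<p. zeta p ^ (\<pi> a + a * y)) = (\<Sum>a<p. zeta p ^ g a)"
    using p2 by (simp add: g_def zeta_power_mod[of p "_ + _ * y"])
  also have "\<dots> = (\<Sum>k<p. of_int (int (card {a. a < p \<and> g a = k})) * zeta p ^ k)"
    using sum_comp_eq_fiber_card[of "{..<p}" "{..<p}" g "\<lambda>k. zeta p ^ k"] g by auto
  finally have S: "(\<Sum>a<p. zeta p ^ (\<pi> a + a * y)) = \<dots>" .
  have "in_O p ((\<Sum>k<p. of_int (int (card {a. a < p \<and> g a = k})) * zeta p ^ k) / of_nat p)"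
    using O[rule_format, OF y] unfolding S by simp
  then have cong: "\<forall>k<p. [card {a. a < p \<and> g a = k} = card {a. a < p \<and> g a = 0}] (mod p)"
    using in_O_div_p_coeffs_cong[OF p, where e = "\<lambda>k. int (card {a. a < p \<and> g a = k})"]
    by (simp add: cong_int_iff)
  have g0: "g 0 = \<pi> 0" using \<pi> p2 by (simp add: g_def)
  have "\<pi> 1 + (\<pi> 0 + (p - \<pi> 1)) = \<pi> 0 + p" using \<pi>[rule_format, of 1] p2 by simp
  then have "g 1 = \<pi> 0" using \<pi> p2 by (simp add: g_def y_def mod_add_right_eq)
  then have "\<forall>a<p. g a = g 0"
    using constant_if_fiber_cards_cong[OF g cong, of 0 1] g0 p2 by simp
  then have const: "(\<pi> a + a * y) mod p = \<pi> 0" if "a < p" for a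
    using that g0 by (simp add: g_def)
  have "y \<noteq> 0"
  proof
    assume "y = 0"
    then have "\<pi> 1 = \<pi> 0" using const[of 1] \<pi>[rule_format, of 1] p2 by simp
    then show False using inj_onD[OF inj, of 1 0] p2 by simp
  qed
  have "\<pi> a = (\<pi> 0 + a * (p - y)) mod p" if "a < p" for a
  proof -
    have "\<pi> a = (\<pi> a + a * y + a * (p - y)) mod p"
      using \<pi> that y by (simp add: add.assoc add_mult_distrib2[symmetric])
    also have "\<dots> = ((\<pi> a + a * y) mod p + a * (p - y)) mod p" by (simp add: mod_add_left_eq)
    finally show ?thesis using const[OF that] by simp
  qed
  moreover have "0 < p - y" "p - y < p" using \<open>y \<noteq> 0\<close> y by simp_all
  ultimately show ?thesis by blast
qed

lemma PI_all_positive_obtain_perm: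
  assumes PI: "PI p f" and pos: "\<forall>\<chi>\<in>Irr p. f \<chi> \<in> Irr p"
  obtains \<pi> where "\<forall>a<p. \<pi> a < p" and "inj_on \<pi> {..<p}"
    and "\<forall>a<p. f (basis a) = basis (\<pi> a)"
proof -
  have "\<forall>a<p. \<exists>b<p. f (basis a) = basis b"
    using pos by (auto simp: Irr_def)
  then obtain \<pi> where \<pi>: "\<forall>a<p. \<pi> a < p \<and> f (basis a) = basis (\<pi> a)" by metis
  have "inj_on f (RK p)" using PI by (simp add: PI_def bij_betw_def)
  have "inj_on \<pi> {..<p}"
  proof (rule inj_onI)
    fix a b
    assume ab: "a \<in> {..<p}" "b \<in> {..<p}" "\<pi> a = \<pi> b"
    then have "f (basis a) = f (basis b)" using \<pi> by simp
    then have "basis a = basis b"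
      using inj_onD[OF \<open>inj_on f (RK p)\<close>] ab by (simp add: basis_in_RK)
    then show "a = b" by (simp add: basis_inject)
  qed
  with \<pi> that show ?thesis by blast
qed

lemma mu_perm:
  assumes "\<forall>a<p. \<pi> a < p \<and> f (basis a) = basis (\<pi> a)"
  shows "mu p f x y = (\<Sum>a<p. zeta p ^ (\<pi> a * x + a * y))"
  unfolding mu_def using assms by (intro sum.cong) (simp_all add: ev_basis chi_def power_add)

lemma centr_card_eq: "centr_card p x = p"
proof -
  have "{h. h < p \<and> (h + x) mod p = (x + h) mod p} = {..<p}" by (auto simp: add.commute)
  then show ?thesis by (simp add: centr_card_def)
qed

lemma perfect_in_O_at_generator:
  assumes "perfect p m" and "1 < p" and "y < p"
  shows "in_O p (m 1 y / of_nat p)"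
  using assms by (simp add: perfect_def centr_card_eq)

theorem mainTheorem11:
  fixes p :: nat and f :: "(nat \<Rightarrow> int) \<Rightarrow> (nat \<Rightarrow> int)"
  assumes "prime p"
    and "PI p f"
    and "\<forall>\<chi>\<in>Irr p. f \<chi> \<in> Irr p"
  shows "\<exists>l<p. \<exists>s. aut p s \<and> (\<forall>v\<in>RK p. I_sig p s (I_lam p l (f v)) = v)"
proof -
  have p: "0 < p" "1 < p" using prime_gt_1_nat[OF assms(1)] by simp_all
  obtain \<pi> where \<pi>: "\<forall>a<p. \<pi> a < p" and inj: "inj_on \<pi> {..<p}"
    and f: "\<forall>a<p. f (basis a) = basis (\<pi> a)"
    using PI_all_positive_obtain_perm[OF assms(2,3)] .
  have "\<forall>y<p. in_O p ((\<Sum>a<p. zeta p ^ (\<pi> a + a * y)) / of_nat p)"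
    using perfect_in_O_at_generator[of p "mu p f"] mu_perm[of p \<pi> f 1] assms(2) \<pi> f p
    by (simp add: PI_def)
  then obtain c where c: "0 < c" "c < p" and aff: "\<forall>a<p. \<pi> a = (\<pi> 0 + a * c) mod p"
    using perm_affine_if_integral[OF assms(1) \<pi> inj] by blast
  obtain t where ct: "(c * t) mod p = 1" using ex_mult_mod_inverse[OF assms(1) c] .
  have "linear_RK p f" using assms(2) by (simp add: PI_def)
  then have "\<forall>v\<in>RK p. I_sig p (\<lambda>x. (c * x) mod p) (I_lam p ((p - \<pi> 0) mod p) (f v)) = v"
    by (metis I_sig_I_lam_affine_perm_RK[OF p(1) ct \<pi> aff] linear_RK_eq_perm_RK[OF _ f])
  moreover have "(p - \<pi> 0) mod p < p" using p by simp
  ultimately show ?thesis using aut_mult_mod[OF ct] by blast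
qed

end
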